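(* Let $p$ be an odd prime, $n$ a positive integer and $i$ an integer with $0\le i\le n/2$ and $p\nmid i$. Then $$v_p\!\left(\binom{2(n-i)}{n-i}^2\binom{n-i}{i}\right)\ge v_p(n).$$
   Context: $v_p$ denotes the $p$-adic valuation. *)

theory Defs
  imports "HOL-Computational_Algebra.Primes"
begin

end

theory Submission
  imports Defs
begin

text \<open>
  By Legendre's formula, the \<open>p\<close>-adic valuation of a binomial coefficient \<open>(a + b) choose a\<close>
  counts the prime powers \<open>q = p^j\<close> at which the addition \<open>a + b\<close> carries, i.e.
  \<open>a mod q + b mod q \<ge> q\<close> (Kummer). With \<open>m = n - i\<close>, the left-hand side therefore counts
  twice the carries of \<open>m + m\<close> plus the carries of \<open>i + (m - i)\<close>. For each of the
  \<open>v\<^sub>p(n)\<close> powers \<open>q = p^j\<close> dividing \<open>n = m + i\<close> but not \<open>i\<close>, one of these two additions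
  carries: otherwise \<open>m mod q + i mod q = q\<close>, \<open>i mod q \<le> m mod q\<close> and \<open>2 (m mod q) < q\<close>
  would be contradictory. The argument does not use that \<open>p\<close> is odd.
\<close>

lemma multiplicity_less_self:
  fixes p x :: nat
  assumes "p > 1" "x > 0"
  shows "multiplicity p x < x"
proof -
  have "x < 2 ^ x" by (rule less_exp)
  also have "\<dots> \<le> p ^ x" using assms(1) by (intro power_mono) auto
  finally have "\<not> p ^ x dvd x" using assms(2) by (auto dest: dvd_imp_le)
  then show ?thesis using assms by (intro multiplicity_lessI) auto
qed

lemma card_prime_power_divisors:
  fixes p x N :: nat
  assumes "p > 1" "x > 0" "x \<le> N"
  shows "card {j \<in> {1..N}. p ^ j dvd x} = multiplicity p x"
proof -
  have "multiplicity p x \<le> N"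
    using multiplicity_less_self[OF assms(1,2)] assms(3) by simp
  moreover have "p ^ j dvd x \<longleftrightarrow> j \<le> multiplicity p x" for j
    by (rule power_dvd_iff_le_multiplicity) (use assms(1,2) in simp_all)
  ultimately have "{j \<in> {1..N}. p ^ j dvd x} = {1..multiplicity p x}"
    by fastforce
  then show ?thesis by simp
qed

theorem multiplicity_fact:
  fixes p a N :: nat
  assumes "prime p" "a \<le> N"
  shows "multiplicity p (fact a :: nat) = (\<Sum>j\<in>{1..N}. a div p ^ j)"
  using assms(2)
proof (induction a)
  case 0
  then show ?case by simp
next
  case (Suc a)
  have "multiplicity p (fact (Suc a) :: nat) = multiplicity p (Suc a * fact a)"
    by (simp only: fact_Suc of_nat_id)
  also have "\<dots> = multiplicity p (Suc a) + multiplicity p (fact a :: nat)"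
    by (rule prime_elem_multiplicity_mult_distrib) (use assms(1) in auto)
  also have "multiplicity p (Suc a) = (\<Sum>j\<in>{1..N}. if p ^ j dvd Suc a then 1 else 0)"
    using card_prime_power_divisors[OF prime_gt_1_nat[OF assms(1)] _ Suc.prems]
    by (simp add: sum.If_cases Int_def conj_commute)
  also have "multiplicity p (fact a :: nat) = (\<Sum>j\<in>{1..N}. a div p ^ j)"
    using Suc by simp
  also have "(\<Sum>j\<in>{1..N}. if p ^ j dvd Suc a then 1 else 0) + (\<Sum>j\<in>{1..N}. a div p ^ j)
      = (\<Sum>j\<in>{1..N}. Suc a div p ^ j)"
    by (auto simp: sum.distrib[symmetric] div_Suc dvd_eq_mod_eq_0 intro!: sum.cong)
  finally show ?case .
qed

text \<open>For \<open>q = p^j\<close>, \<open>carry q a b \<in> {0, 1}\<close> is the carry out of the lowest \<open>j\<close> base-\<open>p\<close>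
  digits when adding \<open>a\<close> and \<open>b\<close>.\<close>

definition carry :: "nat \<Rightarrow> nat \<Rightarrow> nat \<Rightarrow> nat" where
  "carry q a b = (a mod q + b mod q) div q"

lemma carry_eq_0_iff:
  "carry q a b = 0 \<longleftrightarrow> q = 0 \<or> a mod q + b mod q < q"
  by (auto simp: carry_def div_eq_0_iff)

lemma div_add_eq_carry: "(a + b) div q = a div q + b div q + carry q a b"
  unfolding carry_def by (rule div_add1_eq)

theorem multiplicity_binomial:
  fixes p a b N :: nat
  assumes "prime p" "a + b \<le> N"
  shows "multiplicity p ((a + b) choose a) = (\<Sum>j\<in>{1..N}. carry (p ^ j) a b)"
proof -
  have "fact (a + b) = fact a * fact b * ((a + b) choose a :: nat)"
    using binomial_fact_lemma[of a "a + b"] by simp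
  then have "multiplicity p (fact (a + b) :: nat)
      = multiplicity p (fact a :: nat) + multiplicity p (fact b :: nat) + multiplicity p ((a + b) choose a)"
    using assms(1) by (simp add: prime_elem_multiplicity_mult_distrib)
  moreover have "multiplicity p (fact (a + b) :: nat)
      = (\<Sum>j\<in>{1..N}. a div p ^ j) + (\<Sum>j\<in>{1..N}. b div p ^ j) + (\<Sum>j\<in>{1..N}. carry (p ^ j) a b)"
    by (simp only: multiplicity_fact[OF assms] div_add_eq_carry sum.distrib)
  ultimately show ?thesis
    using multiplicity_fact[OF assms(1), of a N] multiplicity_fact[OF assms(1), of b N] assms(2)
    by simp
qed

lemma carry_double_or_carry_split:
  fixes q m i :: nat
  assumes "q > 0" "i \<le> m" "q dvd m + i" "\<not> q dvd i"
  shows "carry q m m > 0 \<or> carry q i (m - i) > 0"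
proof (rule ccontr)
  assume "\<not> ?thesis"
  then have double: "2 * (m mod q) < q" and split: "i mod q + (m - i) mod q < q"
    using assms(1) by (auto simp: carry_eq_0_iff)
  have "m mod q = (i mod q + (m - i) mod q) mod q"
    using assms(2) by (metis le_add_diff_inverse mod_add_eq)
  with split have "i mod q \<le> m mod q" by simp
  moreover have "m mod q + i mod q = q"
  proof -
    have "(m mod q + i mod q) mod q = 0"
      using assms(3) by (simp add: mod_add_eq dvd_eq_mod_eq_0)
    then obtain k where k: "m mod q + i mod q = q * k"
      by (auto simp: mod_eq_0_iff_dvd elim: dvdE)
    have "0 < i mod q" using assms(4) by (simp add: dvd_eq_mod_eq_0)
    with k have "k \<noteq> 0" by (intro notI) simp
    moreover have "q * k < q * 2"
      using k mod_less_divisor[OF assms(1), of m] mod_less_divisor[OF assms(1), of i] by linarith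
    then have "k < 2" by simp
    ultimately show ?thesis using k by simp
  qed
  ultimately show False using double by linarith
qed

theorem proposition16:
  fixes p n i :: nat
  assumes "prime p" and "odd p" and "n > 0" and "2 * i \<le> n" and "\<not> p dvd i"
  shows "multiplicity p ((2 * (n - i) choose (n - i))^2 * ((n - i) choose i)) \<ge> multiplicity p n"
proof -
  define m where "m = n - i"
  define k where "k = multiplicity p n"
  have "i \<le> m" "n = m + i" using assms(4) by (auto simp: m_def)
  have "k \<le> 2 * m"
    using multiplicity_less_self[OF prime_gt_1_nat[OF assms(1)] assms(3)] \<open>i \<le> m\<close> \<open>n = m + i\<close>
    by (simp add: k_def)
  define c where "c j = 2 * carry (p ^ j) m m + carry (p ^ j) i (m - i)" for j
  have "k = (\<Sum>j\<in>{1..k}. 1)" by simp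
  also have "\<dots> \<le> (\<Sum>j\<in>{1..k}. c j)"
  proof (rule sum_mono)
    fix j assume j: "j \<in> {1..k}"
    have "p ^ j dvd m + i"
      using j \<open>n = m + i\<close> by (simp add: k_def multiplicity_dvd')
    moreover have "\<not> p ^ j dvd i"
      using j assms(5) dvd_power[of j p] dvd_trans by auto
    moreover have "p ^ j > 0"
      using assms(1) by (simp add: prime_gt_0_nat)
    ultimately show "1 \<le> c j"
      using carry_double_or_carry_split[of "p ^ j" i m] \<open>i \<le> m\<close> by (auto simp: c_def)
  qed
  also have "\<dots> \<le> (\<Sum>j\<in>{1..2 * m}. c j)" using \<open>k \<le> 2 * m\<close> by (intro sum_mono2) auto
  also have "\<dots> = 2 * multiplicity p ((m + m) choose m) + multiplicity p ((i + (m - i)) choose i)"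
    using multiplicity_binomial[OF assms(1), of m m "2 * m"] multiplicity_binomial[OF assms(1), of i "m - i" "2 * m"] \<open>i \<le> m\<close>
    by (simp add: c_def sum.distrib sum_distrib_left)
  also have "\<dots> = multiplicity p ((2 * m choose m)^2 * (m choose i))"
    using assms(1) \<open>i \<le> m\<close>
    by (simp add: mult_2 prime_elem_multiplicity_mult_distrib prime_elem_multiplicity_power_distrib)
  finally show ?thesis by (simp add: k_def m_def)
qed

end
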